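(* Let $(X,T)$ be a topological dynamical system and $\pi:(X,T)\to(X_{eq},T_{eq})$ the factor map onto its maximal equicontinuous factor. If $(X,T)$ is block $\mathcal{F}_t$-sensitive then $\pi$ is not proximal.
   Context: A topological dynamical system $(X,T)$: compact metric space $(X,d)$, $T$ continuous surjective. $(X,T)$ is block $\mathcal{F}_t$-sensitive if there is $\delta>0$ such that for each $x\in X$, every neighborhood $U$ of $x$ and every $l\in\mathbb{N}$ there is $y_l\in U$ such that $\{n\in\mathbb{Z}_+: d(T^nx,T^ny_l)>\delta\}$ contains $\{m+1,\dots,m+l\}$ for some $m\in\mathbb{N}$. $X_{eq}$ is the maximal equicontinuous factor (every equicontinuous factor of $(X,T)$ is a factor of it). A pair $(x,y)$ is proximal if $\inf_n d(T^nx,T^ny)=0$; a factor map $\pi$ is proximal if every pair $(x,y)$ with $\pi(x)=\pi(y)$ is proximal. *)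

theory Defs
  imports "HOL-Analysis.Analysis" "HOL-Analysis.Function_Metric"
begin

definition tds :: "'a::metric_space set \<Rightarrow> ('a \<Rightarrow> 'a) \<Rightarrow> bool" where
  "tds X T \<longleftrightarrow> X \<noteq> {} \<and> compact X \<and> continuous_on X T \<and> T ` X = X"

definition factor_map ::
  "'a::metric_space set \<Rightarrow> ('a \<Rightarrow> 'a) \<Rightarrow> 'b::metric_space set \<Rightarrow> ('b \<Rightarrow> 'b) \<Rightarrow> ('a \<Rightarrow> 'b) \<Rightarrow> bool" where
  "factor_map X T Y S \<pi> \<longleftrightarrow> tds X T \<and> tds Y S \<and> continuous_on X \<pi> \<and> \<pi> ` X = Y
     \<and> (\<forall>x\<in>X. \<pi> (T x) = S (\<pi> x))"

definition equicontinuous_sys :: "'a::metric_space set \<Rightarrow> ('a \<Rightarrow> 'a) \<Rightarrow> bool" where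
  "equicontinuous_sys X T \<longleftrightarrow> (\<forall>e>0. \<exists>d>0. \<forall>x\<in>X. \<forall>y\<in>X.
     dist x y < d \<longrightarrow> (\<forall>n. dist ((T ^^ n) x) ((T ^^ n) y) < e))"

text \<open>Every compact metric space embeds in the Hilbert-cube-like space nat => real, so
  quantifying over factors living in that type covers all equicontinuous factors up to
  conjugacy.\<close>
definition max_equicontinuous_factor ::
  "'a::metric_space set \<Rightarrow> ('a \<Rightarrow> 'a) \<Rightarrow> 'b::metric_space set \<Rightarrow> ('b \<Rightarrow> 'b) \<Rightarrow> ('a \<Rightarrow> 'b) \<Rightarrow> bool" where
  "max_equicontinuous_factor X T Y S \<pi> \<longleftrightarrow>
     factor_map X T Y S \<pi> \<and> equicontinuous_sys Y S \<and>
     (\<forall>(Z :: (nat \<Rightarrow> real) set) R \<rho>.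
        factor_map X T Z R \<rho> \<and> equicontinuous_sys Z R \<longrightarrow>
        (\<exists>\<psi>. factor_map Y S Z R \<psi> \<and> (\<forall>x\<in>X. \<rho> x = \<psi> (\<pi> x))))"

definition proximal_pair :: "('a::metric_space \<Rightarrow> 'a) \<Rightarrow> 'a \<Rightarrow> 'a \<Rightarrow> bool" where
  "proximal_pair T x y \<longleftrightarrow> (INF n. dist ((T ^^ n) x) ((T ^^ n) y)) = 0"

definition proximal_factor_map :: "'a::metric_space set \<Rightarrow> ('a \<Rightarrow> 'a) \<Rightarrow> ('a \<Rightarrow> 'b) \<Rightarrow> bool" where
  "proximal_factor_map X T \<pi> \<longleftrightarrow> (\<forall>x\<in>X. \<forall>y\<in>X. \<pi> x = \<pi> y \<longrightarrow> proximal_pair T x y)"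

definition block_Ft_sensitive :: "'a::metric_space set \<Rightarrow> ('a \<Rightarrow> 'a) \<Rightarrow> bool" where
  "block_Ft_sensitive X T \<longleftrightarrow> (\<exists>\<delta>>0. \<forall>x\<in>X. \<forall>U. open U \<and> x \<in> U \<longrightarrow>
     (\<forall>l::nat. l \<ge> 1 \<longrightarrow> (\<exists>y\<in>U \<inter> X. \<exists>m::nat. m \<ge> 1 \<and>
        {m+1..m+l} \<subseteq> {n. dist ((T ^^ n) x) ((T ^^ n) y) > \<delta>})))"

end

theory Submission imports Defs begin

text \<open>Block sensitivity at a point x gives points y_k \<rightarrow> x whose orbits stay \<delta>-apart
  from the orbit of x during k+1 consecutive times starting at some s_k. A limit point (a, b)
  of the pairs (T^s_k x, T^s_k y_k) therefore has orbits that are \<delta>-apart at all times, so it is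
  not proximal. Equicontinuity of the factor keeps the images of the orbits of x and y_k
  uniformly close, hence \<pi> a = \<pi> b.\<close>

lemma funpow_image_subset: "T ` X \<subseteq> X \<Longrightarrow> (T ^^ n) ` X \<subseteq> X"
  by (induction n) auto

lemma continuous_on_funpow:
  assumes "continuous_on X T" "T ` X \<subseteq> X"
  shows "continuous_on X (T ^^ n)"
proof (induction n)
  case (Suc n)
  have "continuous_on ((T ^^ n) ` X) T"
    using assms funpow_image_subset continuous_on_subset by metis
  with Suc.IH have "continuous_on X (T \<circ> T ^^ n)" by (rule continuous_on_compose)
  then show ?case by simp
qed simp

lemma funpow_semiconj_on:
  assumes "\<forall>x\<in>X. \<pi> (T x) = S (\<pi> x)" "T ` X \<subseteq> X" "x \<in> X"
  shows "\<pi> ((T ^^ n) x) = (S ^^ n) (\<pi> x)"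
proof (induction n)
  case (Suc n)
  have "(T ^^ n) x \<in> X" using funpow_image_subset[OF assms(2)] assms(3) by blast
  with assms(1) Suc.IH show ?case by simp
qed simp

lemma continuous_on_tendsto_compose_seq:
  fixes g :: "nat \<Rightarrow> 'a::topological_space"
  assumes "continuous_on X f" "\<And>k. g k \<in> X" "g \<longlonglongrightarrow> a" "a \<in> X"
  shows "(\<lambda>k. f (g k)) \<longlonglongrightarrow> f a"
  using continuous_on_tendsto_compose[OF assms(1,3,4)] assms(2) by simp

lemma equicontinuous_sys_iterates_tendsto:
  fixes u v :: "nat \<Rightarrow> 'a::metric_space"
  assumes "equicontinuous_sys Y S" "\<And>k. u k \<in> Y" "\<And>k. v k \<in> Y"
    and "(\<lambda>k. dist (u k) (v k)) \<longlonglongrightarrow> 0"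
  shows "(\<lambda>k. dist ((S ^^ t k) (u k)) ((S ^^ t k) (v k))) \<longlonglongrightarrow> 0"
proof (rule tendsto_iff[THEN iffD2], intro allI impI)
  fix e :: real assume "e > 0"
  then obtain d where "d > 0" and d: "\<forall>u\<in>Y. \<forall>v\<in>Y.
      dist u v < d \<longrightarrow> (\<forall>n. dist ((S ^^ n) u) ((S ^^ n) v) < e)"
    using assms(1) unfolding equicontinuous_sys_def by blast
  have "eventually (\<lambda>k. dist (u k) (v k) < d) sequentially"
    using order_tendstoD(2)[OF assms(4) \<open>d > 0\<close>] .
  then show "eventually (\<lambda>k. dist (dist ((S ^^ t k) (u k)) ((S ^^ t k) (v k))) 0 < e) sequentially"
    by (rule eventually_mono) (use d assms(2,3) in auto)
qed

lemma block_Ft_sensitive_blocks: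
  assumes "block_Ft_sensitive X T" "x \<in> X"
  obtains \<delta> y s where "\<delta> > 0" "\<And>k. y k \<in> X" "y \<longlonglongrightarrow> x"
    "\<And>k n. n \<le> k \<Longrightarrow> \<delta> < dist ((T ^^ (n + s k)) x) ((T ^^ (n + s k)) (y k))"
proof -
  obtain \<delta> where "\<delta> > 0" and sens: "\<forall>x\<in>X. \<forall>U. open U \<and> x \<in> U \<longrightarrow>
      (\<forall>l::nat. l \<ge> 1 \<longrightarrow> (\<exists>y\<in>U \<inter> X. \<exists>m::nat. m \<ge> 1 \<and>
        {m+1..m+l} \<subseteq> {n. dist ((T ^^ n) x) ((T ^^ n) y) > \<delta>}))"
    using assms(1) unfolding block_Ft_sensitive_def by blast
  have "\<exists>y m. y \<in> ball x (inverse (real (Suc k))) \<inter> X \<and>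
      {m+1..m+Suc k} \<subseteq> {n. dist ((T ^^ n) x) ((T ^^ n) y) > \<delta>}" for k
  proof -
    have "\<exists>y\<in>ball x (inverse (real (Suc k))) \<inter> X. \<exists>m\<ge>1.
        {m+1..m+Suc k} \<subseteq> {n. dist ((T ^^ n) x) ((T ^^ n) y) > \<delta>}"
      by (rule sens[rule_format, OF assms(2)]) simp_all
    then show ?thesis by blast
  qed
  then obtain y m where ym: "\<And>k. y k \<in> ball x (inverse (real (Suc k))) \<inter> X"
    and block: "\<And>k. {m k+1..m k+Suc k} \<subseteq> {n. dist ((T ^^ n) x) ((T ^^ n) (y k)) > \<delta>}"
    by metis
  show ?thesis
  proof (rule that[of \<delta> y "\<lambda>k. m k + 1"])
    have "norm (dist (y k) x) \<le> inverse (real (Suc k))" for k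
      using ym[of k] by (simp add: dist_commute)
    then have "(\<lambda>k. dist (y k) x) \<longlonglongrightarrow> 0"
      by (intro Lim_null_comparison[OF always_eventually LIMSEQ_inverse_real_of_nat] allI)
    then show "y \<longlonglongrightarrow> x" by (rule tendsto_dist_iff[THEN iffD2])
    show "\<delta> < dist ((T ^^ (n + (m k + 1))) x) ((T ^^ (n + (m k + 1))) (y k))"
      if "n \<le> k" for k n
    proof -
      have "n + (m k + 1) \<in> {m k+1..m k+Suc k}" using that by simp
      then show ?thesis using block[of k] by blast
    qed
    show "y k \<in> X" for k using ym[of k] by blast
  qed fact
qed

lemma equicontinuous_factor_orbits_tendsto:
  fixes y :: "nat \<Rightarrow> 'a::metric_space" and \<pi> :: "'a \<Rightarrow> 'b::metric_space"
  assumes "factor_map X T Y S \<pi>" "equicontinuous_sys Y S"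
    and "x \<in> X" "\<And>k. y k \<in> X" "y \<longlonglongrightarrow> x"
  shows "(\<lambda>k. dist (\<pi> ((T ^^ t k) x)) (\<pi> ((T ^^ t k) (y k)))) \<longlonglongrightarrow> 0"
proof -
  have \<pi>: "continuous_on X \<pi>" "\<pi> ` X = Y" "\<forall>x\<in>X. \<pi> (T x) = S (\<pi> x)" and "T ` X \<subseteq> X"
    using assms(1) unfolding factor_map_def tds_def by auto
  have "(\<lambda>k. \<pi> (y k)) \<longlonglongrightarrow> \<pi> x" using continuous_on_tendsto_compose_seq[OF \<pi>(1) assms(4,5,3)] .
  then have "(\<lambda>k. dist (\<pi> (y k)) (\<pi> x)) \<longlonglongrightarrow> 0" by (rule tendsto_dist_iff[THEN iffD1])
  then have close: "(\<lambda>k. dist (\<pi> x) (\<pi> (y k))) \<longlonglongrightarrow> 0" by (simp add: dist_commute)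
  have "(\<lambda>k. dist ((S ^^ t k) (\<pi> x)) ((S ^^ t k) (\<pi> (y k)))) \<longlonglongrightarrow> 0"
    by (rule equicontinuous_sys_iterates_tendsto[OF assms(2) _ _ close]) (use \<pi>(2) assms(3,4) in auto)
  then show ?thesis using funpow_semiconj_on[OF \<pi>(3) \<open>T ` X \<subseteq> X\<close>] assms(3,4) by simp
qed

lemma compact_pair_convergent_subseq:
  fixes X :: "'a::metric_space set" and p q :: "nat \<Rightarrow> 'a"
  assumes "compact X" "\<And>k. p k \<in> X" "\<And>k. q k \<in> X"
  obtains a b r where "a \<in> X" "b \<in> X" "strict_mono r" "(p \<circ> r) \<longlonglongrightarrow> a" "(q \<circ> r) \<longlonglongrightarrow> b"
proof -
  have "seq_compact (X \<times> X)" using assms(1) by (intro compact_imp_seq_compact compact_Times)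
  moreover have "\<forall>k. (p k, q k) \<in> X \<times> X" using assms(2,3) by simp
  ultimately obtain ab r where ab: "ab \<in> X \<times> X" and "strict_mono r"
      and lim: "((\<lambda>k. (p k, q k)) \<circ> r) \<longlonglongrightarrow> ab"
    by (rule seq_compactE)
  show ?thesis
  proof (rule that)
    show "fst ab \<in> X" "snd ab \<in> X" using ab by (auto simp: mem_Times_iff)
    show "(p \<circ> r) \<longlonglongrightarrow> fst ab" "(q \<circ> r) \<longlonglongrightarrow> snd ab"
      using tendsto_fst[OF lim] tendsto_snd[OF lim] by (simp_all add: o_def)
  qed fact
qed

lemma limit_pair_separated:
  fixes p q :: "nat \<Rightarrow> 'a::metric_space" and r :: "nat \<Rightarrow> nat"
  assumes "continuous_on X T" "T ` X \<subseteq> X"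
    and "\<And>k. p k \<in> X" "\<And>k. q k \<in> X" "a \<in> X" "b \<in> X"
    and "strict_mono r" "(p \<circ> r) \<longlonglongrightarrow> a" "(q \<circ> r) \<longlonglongrightarrow> b"
    and "\<And>k n. n \<le> k \<Longrightarrow> \<delta> < dist ((T ^^ n) (p k)) ((T ^^ n) (q k))"
  shows "\<delta> \<le> dist ((T ^^ n) a) ((T ^^ n) b)"
proof (rule tendsto_lowerbound)
  have c: "continuous_on X (T ^^ n)" using continuous_on_funpow assms(1,2) .
  show "(\<lambda>j. dist ((T ^^ n) ((p \<circ> r) j)) ((T ^^ n) ((q \<circ> r) j)))
      \<longlonglongrightarrow> dist ((T ^^ n) a) ((T ^^ n) b)"
    using continuous_on_tendsto_compose_seq[OF c _ assms(8,5)]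
      continuous_on_tendsto_compose_seq[OF c _ assms(9,6)] assms(3,4)
    by (simp add: tendsto_dist)
  have "\<delta> \<le> dist ((T ^^ n) ((p \<circ> r) j)) ((T ^^ n) ((q \<circ> r) j))" if "n \<le> j" for j
  proof -
    have "n \<le> r j" using seq_suble[OF assms(7), of j] that by linarith
    then show ?thesis using assms(10)[of n "r j"] by simp
  qed
  then show "eventually (\<lambda>j. \<delta> \<le> dist ((T ^^ n) ((p \<circ> r) j)) ((T ^^ n) ((q \<circ> r) j)))
      sequentially"
    by (rule eventually_sequentiallyI)
qed simp

lemma limit_pair_same_image:
  fixes p q :: "nat \<Rightarrow> 'a::topological_space" and \<pi> :: "'a \<Rightarrow> 'b::metric_space"
    and r :: "nat \<Rightarrow> nat"
  assumes "continuous_on X \<pi>" "\<And>k. p k \<in> X" "\<And>k. q k \<in> X" "a \<in> X" "b \<in> X"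
    and "strict_mono r" "(p \<circ> r) \<longlonglongrightarrow> a" "(q \<circ> r) \<longlonglongrightarrow> b"
    and "(\<lambda>k. dist (\<pi> (p k)) (\<pi> (q k))) \<longlonglongrightarrow> 0"
  shows "\<pi> a = \<pi> b"
proof -
  have "(\<lambda>j. dist (\<pi> ((p \<circ> r) j)) (\<pi> ((q \<circ> r) j))) \<longlonglongrightarrow> dist (\<pi> a) (\<pi> b)"
    using continuous_on_tendsto_compose_seq[OF assms(1) _ assms(7,4)]
      continuous_on_tendsto_compose_seq[OF assms(1) _ assms(8,5)] assms(2,3)
    by (simp add: tendsto_dist)
  moreover have "(\<lambda>j. dist (\<pi> ((p \<circ> r) j)) (\<pi> ((q \<circ> r) j))) \<longlonglongrightarrow> 0"
    using LIMSEQ_subseq_LIMSEQ[OF assms(9,6)] by (simp add: o_def)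
  ultimately show ?thesis using LIMSEQ_unique by fastforce
qed

lemma separated_not_proximal_pair:
  assumes "\<delta> > 0" "\<And>n. \<delta> \<le> dist ((T ^^ n) x) ((T ^^ n) y)"
  shows "\<not> proximal_pair T x y"
proof -
  have "\<delta> \<le> (INF n. dist ((T ^^ n) x) ((T ^^ n) y))"
    by (rule cINF_greatest) (simp_all add: assms(2))
  with assms(1) show ?thesis unfolding proximal_pair_def by simp
qed

theorem proposition4p2:
  fixes X :: "'a::metric_space set" and T :: "'a \<Rightarrow> 'a"
    and Xeq :: "'b::metric_space set" and Teq :: "'b \<Rightarrow> 'b" and \<pi> :: "'a \<Rightarrow> 'b"
  assumes "tds X T"
    and "max_equicontinuous_factor X T Xeq Teq \<pi>"
    and "block_Ft_sensitive X T"
  shows "\<not> proximal_factor_map X T \<pi>"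
proof -
  have X: "X \<noteq> {}" "compact X" "continuous_on X T" "T ` X \<subseteq> X"
    using assms(1) unfolding tds_def by auto
  have fm: "factor_map X T Xeq Teq \<pi>" and eq: "equicontinuous_sys Xeq Teq"
    using assms(2) unfolding max_equicontinuous_factor_def by auto
  obtain x where x: "x \<in> X" using X(1) by blast
  obtain \<delta> y s where "\<delta> > 0" and y: "\<And>k. y k \<in> X" "y \<longlonglongrightarrow> x"
    and block: "\<And>k n. n \<le> k \<Longrightarrow> \<delta> < dist ((T ^^ (n + s k)) x) ((T ^^ (n + s k)) (y k))"
    by (rule block_Ft_sensitive_blocks[OF assms(3) x]) blast
  define p where "p k = (T ^^ s k) x" for k
  define q where "q k = (T ^^ s k) (y k)" for k
  have pq: "p k \<in> X" "q k \<in> X" for k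
    unfolding p_def q_def using funpow_image_subset[OF X(4)] x y(1) by blast+
  obtain a b r where ab: "a \<in> X" "b \<in> X" "strict_mono r" "(p \<circ> r) \<longlonglongrightarrow> a" "(q \<circ> r) \<longlonglongrightarrow> b"
    by (rule compact_pair_convergent_subseq[OF X(2) pq])
  have "(\<lambda>k. dist (\<pi> (p k)) (\<pi> (q k))) \<longlonglongrightarrow> 0"
    unfolding p_def q_def using equicontinuous_factor_orbits_tendsto[OF fm eq x y] .
  then have "\<pi> a = \<pi> b"
    using fm limit_pair_same_image[OF _ pq ab] unfolding factor_map_def by blast
  moreover have "\<delta> \<le> dist ((T ^^ n) a) ((T ^^ n) b)" for n
  proof (rule limit_pair_separated[OF X(3,4) pq ab])
    show "\<delta> < dist ((T ^^ i) (p k)) ((T ^^ i) (q k))" if "i \<le> k" for i k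
      using block[OF that] by (simp add: p_def q_def funpow_add)
  qed
  then have "\<not> proximal_pair T a b" by (rule separated_not_proximal_pair[OF \<open>\<delta> > 0\<close>])
  ultimately show ?thesis using ab(1,2) unfolding proximal_factor_map_def by blast
qed

end
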